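(* For $n\ge 1$, the number of shallow $231$-avoiding centrosymmetric permutations in $S_n$ equals $2^{\lfloor n/2\rfloor}$ (in fact every $231$-avoiding centrosymmetric permutation is shallow).
   Context: For $\pi\in S_n$: $D(\pi)=\sum_{i}|\pi_i-i|$, $I(\pi)$ is the number of inversions, $T(\pi)=n-\mathrm{cyc}(\pi)$ with $\mathrm{cyc}$ the number of cycles in the disjoint cycle decomposition; $\pi$ is shallow if $I(\pi)+T(\pi)=D(\pi)$. A permutation avoids a pattern $\sigma$ if it has no subsequence order-isomorphic to $\sigma$. The reverse-complement $\pi^{rc}$ is defined by $\pi^{rc}_{n+1-i}=n+1-\pi_i$; $\pi$ is centrosymmetric if $\pi=\pi^{rc}$. *)

theory Defs
  imports "HOL-Combinatorics.Permutations"
begin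

text \<open>Permutations of S_n are represented as functions p with p permutes {1..n}.\<close>

definition displacement :: "nat \<Rightarrow> (nat \<Rightarrow> nat) \<Rightarrow> int" where
  "displacement n p = (\<Sum>i\<in>{1..n}. \<bar>int (p i) - int i\<bar>)"

definition inversions :: "nat \<Rightarrow> (nat \<Rightarrow> nat) \<Rightarrow> nat" where
  "inversions n p = card {(i, j). i \<in> {1..n} \<and> j \<in> {1..n} \<and> i < j \<and> p j < p i}"

definition cycle_of :: "(nat \<Rightarrow> nat) \<Rightarrow> nat \<Rightarrow> nat set" where
  "cycle_of p i = {j. \<exists>k. (p ^^ k) i = j}"

definition num_cycles :: "nat \<Rightarrow> (nat \<Rightarrow> nat) \<Rightarrow> nat" where
  "num_cycles n p = card (cycle_of p ` {1..n})"

definition reflection_len :: "nat \<Rightarrow> (nat \<Rightarrow> nat) \<Rightarrow> nat" where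
  "reflection_len n p = n - num_cycles n p"

definition shallow :: "nat \<Rightarrow> (nat \<Rightarrow> nat) \<Rightarrow> bool" where
  "shallow n p \<longleftrightarrow> int (inversions n p) + int (reflection_len n p) = displacement n p"

definition avoids_231 :: "nat \<Rightarrow> (nat \<Rightarrow> nat) \<Rightarrow> bool" where
  "avoids_231 n p \<longleftrightarrow> \<not> (\<exists>i j k. 1 \<le> i \<and> i < j \<and> j < k \<and> k \<le> n \<and> p k < p i \<and> p i < p j)"

definition centrosymmetric :: "nat \<Rightarrow> (nat \<Rightarrow> nat) \<Rightarrow> bool" where
  "centrosymmetric n p \<longleftrightarrow> (\<forall>i\<in>{1..n}. p (n + 1 - i) = n + 1 - p i)"

end

theory Submission
  imports Defs
begin

(* A 231-avoiding centrosymmetric permutation also avoids 312, the reverse-complement of 231,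
   so it is layered: a direct sum of decreasing runs of consecutive values.  Displacement,
   inversions and the number of cycles are additive over direct sums, and a single decreasing
   run of length L has I + T = D = floor(L^2 / 2); hence layered permutations are shallow.
   A centrosymmetric layered permutation of length L is either one run, or has runs of the
   same length k <= L/2 at both ends around a centrosymmetric layered permutation of length
   L - 2k.  So their number c(L) satisfies c(L) = 1 + (SUM k. c(L - 2k)), i.e. c(L) = 2^(L div 2). *)

section \<open>Pattern avoidance on intervals\<close>

text \<open>Permutations are handled on half-open intervals \<open>{a..<b}\<close>, fixing everything outside,
  so that blocks can be split off; the \<open>{1..n}\<close> of the statement is \<open>{1..<Suc n}\<close>.\<close>

definition pattern_free_on :: "(nat \<Rightarrow> nat \<Rightarrow> nat \<Rightarrow> bool) \<Rightarrow> nat \<Rightarrow> nat \<Rightarrow> (nat \<Rightarrow> nat) \<Rightarrow> bool" where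
  "pattern_free_on P a b p \<longleftrightarrow>
     \<not> (\<exists>i j k. a \<le> i \<and> i < j \<and> j < k \<and> k < b \<and> P (p i) (p j) (p k))"

abbreviation avoids_231_on :: "nat \<Rightarrow> nat \<Rightarrow> (nat \<Rightarrow> nat) \<Rightarrow> bool" where
  "avoids_231_on \<equiv> pattern_free_on (\<lambda>x y z. z < x \<and> x < y)"

abbreviation avoids_312_on :: "nat \<Rightarrow> nat \<Rightarrow> (nat \<Rightarrow> nat) \<Rightarrow> bool" where
  "avoids_312_on \<equiv> pattern_free_on (\<lambda>x y z. y < z \<and> z < x)"

lemma pattern_free_onD:
  "pattern_free_on P a b p \<Longrightarrow> a \<le> i \<Longrightarrow> i < j \<Longrightarrow> j < k \<Longrightarrow> k < b \<Longrightarrow> \<not> P (p i) (p j) (p k)"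
  unfolding pattern_free_on_def by blast

lemma pattern_free_on_cong:
  "(\<And>i. a \<le> i \<Longrightarrow> i < b \<Longrightarrow> p i = q i) \<Longrightarrow> pattern_free_on P a b p = pattern_free_on P a b q"
  unfolding pattern_free_on_def by (intro arg_cong[where f = Not] ex_cong1) (auto simp: less_imp_le_nat)

lemma pattern_free_on_subinterval:
  "pattern_free_on P a b p \<Longrightarrow> a \<le> a' \<Longrightarrow> b' \<le> b \<Longrightarrow> pattern_free_on P a' b' p"
  unfolding pattern_free_on_def by (blast intro: le_trans less_le_trans)

lemma pattern_free_on_decreasing:
  assumes "\<And>x y z. P x y z \<Longrightarrow> x < y \<or> y < z"
    and "\<And>i j. a \<le> i \<Longrightarrow> i < j \<Longrightarrow> j < b \<Longrightarrow> p j < p i"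
  shows "pattern_free_on P a b p"
  unfolding pattern_free_on_def
proof clarify
  fix i j k assume ijk: "a \<le> i" "i < j" "j < k" "k < b" and P: "P (p i) (p j) (p k)"
  have "p j < p i" "p k < p j"
    using assms(2) ijk by (meson le_trans less_imp_le_nat less_le_trans)+
  then show False
    using assms(1)[OF P] by simp
qed

lemma pattern_free_on_concat:
  assumes first_above_last: "\<And>x y z. P x y z \<Longrightarrow> z < x"
    and "a \<le> m" "m \<le> b"
    and lower: "\<And>i j. a \<le> i \<Longrightarrow> i < m \<Longrightarrow> m \<le> j \<Longrightarrow> j < b \<Longrightarrow> p i < p j"
    and left: "pattern_free_on P a m p" and right: "pattern_free_on P m b p"
  shows "pattern_free_on P a b p"
  unfolding pattern_free_on_def
proof clarify
  fix i j k assume ijk: "a \<le> i" "i < j" "j < k" "k < b" and P: "P (p i) (p j) (p k)"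
  consider "k < m" | "m \<le> i" | "i < m" "m \<le> k" by linarith
  then show False
  proof cases
    case 1 then show ?thesis using pattern_free_onD[OF left, of i j k] ijk P by simp
  next
    case 2 then show ?thesis using pattern_free_onD[OF right, of i j k] ijk P by simp
  next
    case 3 then show ?thesis using lower[of i k] first_above_last[OF P] ijk by simp
  qed
qed

definition rev_ivl :: "nat \<Rightarrow> nat \<Rightarrow> nat \<Rightarrow> nat" where
  "rev_ivl a b i = (if a \<le> i \<and> i < b then a + b - 1 - i else i)"

lemma rev_ivl_permutes: "rev_ivl a b permutes {a..<b}"
  by (rule inj_imp_permutes) (auto simp: rev_ivl_def inj_on_def)

lemma rev_ivl_rev_ivl [simp]: "rev_ivl a b (rev_ivl a b i) = i"
  by (auto simp: rev_ivl_def)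

lemma rev_ivl_decreasing: "a \<le> i \<Longrightarrow> i < j \<Longrightarrow> j < b \<Longrightarrow> rev_ivl a b j < rev_ivl a b i"
  by (simp add: rev_ivl_def)

section \<open>Layered permutations\<close>

text \<open>Layered permutations are the direct sums of decreasing runs of consecutive values.\<close>
definition layered_on :: "nat \<Rightarrow> nat \<Rightarrow> (nat \<Rightarrow> nat) \<Rightarrow> bool" where
  "layered_on a b p \<longleftrightarrow> p permutes {a..<b} \<and> avoids_231_on a b p \<and> avoids_312_on a b p"

lemma layered_on_rev_ivl: "layered_on a b (rev_ivl a b)"
proof -
  have dec: "\<And>i j. a \<le> i \<Longrightarrow> i < j \<Longrightarrow> j < b \<Longrightarrow> rev_ivl a b j < rev_ivl a b i"
    by (rule rev_ivl_decreasing)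
  have "avoids_231_on a b (rev_ivl a b)" "avoids_312_on a b (rev_ivl a b)"
    by (rule pattern_free_on_decreasing; use dec in auto)+
  then show ?thesis
    by (simp add: layered_on_def rev_ivl_permutes)
qed

lemma initial_segment_eq_atLeastLessThan:
  fixes S :: "nat set"
  assumes "finite S" and lower: "\<And>j. j \<in> S \<Longrightarrow> a \<le> j"
    and down: "\<And>i j. j \<in> S \<Longrightarrow> a \<le> i \<Longrightarrow> i < j \<Longrightarrow> i \<in> S"
  shows "S = {a..<a + card S}"
proof (rule card_subset_eq)
  show "S \<subseteq> {a..<a + card S}"
  proof
    fix j assume "j \<in> S"
    then have "{a..j} \<subseteq> S"
      using down by (auto simp: order_le_less)
    then have "card {a..j} \<le> card S"
      using \<open>finite S\<close> by (rule card_mono[rotated])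
    then show "j \<in> {a..<a + card S}"
      using lower[OF \<open>j \<in> S\<close>] by simp
  qed
qed simp_all

lemma decreasing_gap:
  fixes f :: "nat \<Rightarrow> nat"
  assumes dec: "\<And>i j. a \<le> i \<Longrightarrow> i < j \<Longrightarrow> j < b \<Longrightarrow> f j < f i"
    and "a \<le> i" "i + d < b"
  shows "f (i + d) + d \<le> f i"
  using assms(3)
proof (induction d)
  case (Suc d)
  have "f (i + Suc d) < f (i + d)"
    using dec[of "i + d" "i + Suc d"] \<open>a \<le> i\<close> Suc.prems by simp
  with Suc show ?case by simp
qed simp

lemma decreasing_endomap_eq_rev_ivl:
  fixes f :: "nat \<Rightarrow> nat"
  assumes maps: "\<And>i. a \<le> i \<Longrightarrow> i < b \<Longrightarrow> a \<le> f i \<and> f i < b"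
    and dec: "\<And>i j. a \<le> i \<Longrightarrow> i < j \<Longrightarrow> j < b \<Longrightarrow> f j < f i"
    and "a \<le> i" "i < b"
  shows "f i = rev_ivl a b i"
proof -
  have "f (a + (i - a)) + (i - a) \<le> f a"
    using decreasing_gap[of a b f a "i - a"] dec assms(3,4) by simp
  moreover have "f (i + (b - 1 - i)) + (b - 1 - i) \<le> f i"
    using decreasing_gap[of a b f i "b - 1 - i"] dec assms(3,4) by simp
  moreover have "a \<le> f (b - 1)" "f a < b"
    using maps[of a] maps[of "b - 1"] assms(3,4) by auto
  ultimately show ?thesis
    using assms(3,4) by (simp add: rev_ivl_def)
qed

lemma permutes_split_off:
  assumes p: "p permutes S" and f: "f permutes T" and "T \<subseteq> S"
    and agree: "\<And>x. x \<in> T \<Longrightarrow> p x = f x"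
  defines "r \<equiv> \<lambda>x. if x \<in> T then x else p x"
  shows "r permutes S - T" "p = f \<circ> r" "p = r \<circ> f"
proof -
  have notin: "p x \<notin> T" if "x \<notin> T" for x
  proof
    assume "p x \<in> T"
    then have "p x \<in> f ` T" by (simp add: permutes_image[OF f])
    then obtain y where "y \<in> T" "p x = f y" by auto
    then have "p x = p y" using agree by simp
    then show False
      using permutes_inj[OF p] \<open>y \<in> T\<close> that by (auto dest: injD)
  qed
  have "r = inv f \<circ> p"
  proof
    fix x show "r x = (inv f \<circ> p) x"
    proof (cases "x \<in> T")
      case True then show ?thesis
        using agree permutes_inverses(2)[OF f] by (simp add: r_def)
    next
      case False then show ?thesis
        using notin permutes_not_in[OF permutes_inv[OF f]] by (simp add: r_def)
    qed
  qed
  then have r: "r permutes S"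
    using permutes_compose[OF p permutes_subset[OF permutes_inv[OF f] \<open>T \<subseteq> S\<close>]] by simp
  have "r x = x" if "x \<notin> S - T" for x
    using that permutes_not_in[OF p] by (auto simp: r_def)
  then show "r permutes S - T"
    using r by (simp add: permutes_def)
  show "p = f \<circ> r" "p = r \<circ> f"
    using agree notin permutes_not_in[OF f] permutes_in_image[OF f]
    by (auto simp: r_def fun_eq_iff)
qed

text \<open>Avoiding 231 with \<open>a\<close> in the role of the 2 puts all values below \<open>p a\<close> right after
  position \<open>a\<close>.\<close>
lemma layered_on_first_run_positions:
  assumes L: "layered_on a b p" and "a < b"
  shows "p -` {a..<Suc (p a)} = {a..<Suc (p a)}"
proof -
  have perm: "p permutes {a..<b}" and A231: "avoids_231_on a b p"
    using L by (auto simp: layered_on_def)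
  have range: "a \<le> i \<Longrightarrow> i < b \<Longrightarrow> a \<le> p i \<and> p i < b" for i
    using permutes_in_image[OF perm] by auto
  define m where "m = Suc (p a)"
  have m: "a < m" "m \<le> b"
    using range[of a] \<open>a < b\<close> by (auto simp: m_def)
  define Q where "Q = p -` {a..<m}"
  have inQ: "j \<in> Q \<longleftrightarrow> a \<le> j \<and> j < b \<and> p j < m" for j
    using range[of j] permutes_not_in[OF perm, of j] m
    by (cases "a \<le> j \<and> j < b") (auto simp: Q_def)
  have "card Q = m - a"
    unfolding Q_def using permutes_inj[OF perm] permutes_surj[OF perm] by (simp add: card_vimage_inj)
  moreover have "Q = {a..<a + card Q}"
  proof (rule initial_segment_eq_atLeastLessThan)
    have "Q \<subseteq> {a..<b}" by (auto simp: inQ)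
    then show "finite Q" by (rule finite_subset) simp
    show "a \<le> j" if "j \<in> Q" for j using that by (simp add: inQ)
    show "i \<in> Q" if "j \<in> Q" "a \<le> i" "i < j" for i j
    proof (rule ccontr)
      assume "i \<notin> Q"
      then have "a < i" "p a < p i" using that by (auto simp: inQ m_def order_le_less)
      moreover have "p j \<noteq> p a"
        using permutes_inj[OF perm] that by (metis injD order.strict_iff_not)
      then have "p j < p a"
        using that by (simp add: inQ m_def less_Suc_eq)
      ultimately show False
        using pattern_free_onD[OF A231, of a i j] that by (simp add: inQ)
    qed
  qed
  ultimately show ?thesis using m by (simp add: Q_def m_def)
qed

text \<open>Avoiding 312 with \<open>a\<close> in the role of the 3 makes \<open>p\<close> decrease on these positions.\<close>
lemma layered_on_first_run:
  assumes L: "layered_on a b p" and "a < b"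
  shows "Suc (p a) \<le> b" and "\<And>i. a \<le> i \<Longrightarrow> i < Suc (p a) \<Longrightarrow> p i = rev_ivl a (Suc (p a)) i"
proof -
  define m where "m = Suc (p a)"
  have perm: "p permutes {a..<b}" and A312: "avoids_312_on a b p"
    using L by (auto simp: layered_on_def)
  show "Suc (p a) \<le> b"
    using permutes_in_image[OF perm, of a] \<open>a < b\<close> by simp
  then have "m \<le> b" by (simp add: m_def)
  have block: "a \<le> p i \<and> p i < m" if "a \<le> i" "i < m" for i
    using that layered_on_first_run_positions[OF assms] by (auto simp: m_def)
  have inj: "p i \<noteq> p j" if "i \<noteq> j" for i j
    using permutes_inj[OF perm] that by (auto dest: injD)
  have dec: "p j < p i" if "a \<le> i" "i < j" "j < m" for i j
  proof -
    have "p j < p a" using block[of j] inj[of j a] that by (auto simp: m_def)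
    moreover have "\<not> (p i < p j \<and> p j < p a)" if "a < i"
      using pattern_free_onD[OF A312, of a i j] \<open>a < i\<close> \<open>i < j\<close> \<open>j < m\<close> \<open>m \<le> b\<close> by simp
    ultimately show ?thesis
      using inj[of i j] that by (cases "a = i") auto
  qed
  show "p i = rev_ivl a (Suc (p a)) i" if "a \<le> i" "i < Suc (p a)" for i
    using decreasing_endomap_eq_rev_ivl[OF block dec] that by (simp add: m_def)
qed

lemma layered_on_decompose:
  assumes L: "layered_on a b p" and "a < b"
  obtains m q where "a < m" "m \<le> b" "layered_on m b q" "p = rev_ivl a m \<circ> q"
proof -
  define m where "m = Suc (p a)"
  have perm: "p permutes {a..<b}"
    using L by (simp add: layered_on_def)
  have m: "a < m" "m \<le> b"
    using layered_on_first_run(1)[OF assms] permutes_in_image[OF perm, of a] \<open>a < b\<close>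
    by (auto simp: m_def)
  define q where "q = (\<lambda>x. if x \<in> {a..<m} then x else p x)"
  have "{a..<m} \<subseteq> {a..<b}" using m by auto
  moreover have "x \<in> {a..<m} \<Longrightarrow> p x = rev_ivl a m x" for x
    using layered_on_first_run(2)[OF assms, of x] unfolding m_def by simp
  ultimately have split: "q permutes {a..<b} - {a..<m}" "p = rev_ivl a m \<circ> q"
    using permutes_split_off(1,2)[OF perm rev_ivl_permutes[of a m]] unfolding q_def by blast+
  have "{a..<b} - {a..<m} = {m..<b}" using m by auto
  moreover have "pattern_free_on P m b q" if "pattern_free_on P a b p" for P
    using pattern_free_on_subinterval[OF that, of m b] pattern_free_on_cong[of m b q p P] m
    by (simp add: q_def)
  ultimately have "layered_on m b q"
    using split L by (simp add: layered_on_def)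
  with m split show thesis using that by blast
qed

section \<open>Shallowness of layered permutations\<close>

definition displacement_on :: "nat \<Rightarrow> nat \<Rightarrow> (nat \<Rightarrow> nat) \<Rightarrow> int" where
  "displacement_on a b p = (\<Sum>i\<in>{a..<b}. \<bar>int (p i) - int i\<bar>)"

definition inversions_on :: "nat \<Rightarrow> nat \<Rightarrow> (nat \<Rightarrow> nat) \<Rightarrow> nat" where
  "inversions_on a b p = card {(i, j). a \<le> i \<and> i < j \<and> j < b \<and> p j < p i}"

definition num_cycles_on :: "nat \<Rightarrow> nat \<Rightarrow> (nat \<Rightarrow> nat) \<Rightarrow> nat" where
  "num_cycles_on a b p = card (cycle_of p ` {a..<b})"

text \<open>The identity \<open>I + T = D\<close>, with \<open>T = (b - a) - cyc\<close> moved across to avoid truncated subtraction.\<close>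
definition shallow_on :: "nat \<Rightarrow> nat \<Rightarrow> (nat \<Rightarrow> nat) \<Rightarrow> bool" where
  "shallow_on a b p \<longleftrightarrow>
     int (inversions_on a b p) + int (b - a) = displacement_on a b p + int (num_cycles_on a b p)"

lemma finite_ordered_pairs: "finite {(i, j). a \<le> i \<and> i < j \<and> j < (b::nat) \<and> P i j}"
  by (rule finite_subset[of _ "{a..<b} \<times> {a..<b}"]) auto

lemma self_in_cycle_of: "x \<in> cycle_of f x"
  unfolding cycle_of_def by (auto intro: exI[of _ 0])

lemma funpow_agree_on_invariant:
  assumes "\<And>x. x \<in> S \<Longrightarrow> f x \<in> S" "\<And>x. x \<in> S \<Longrightarrow> f x = g x" "x \<in> S"
  shows "(f ^^ k) x = (g ^^ k) x \<and> (f ^^ k) x \<in> S"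
proof (induction k)
  case (Suc k)
  then have "(f ^^ k) x \<in> S" "(f ^^ k) x = (g ^^ k) x" by auto
  with assms(1,2)[of "(f ^^ k) x"] show ?case by simp
qed (use assms(3) in simp)

lemma cycle_of_agree_on_invariant:
  assumes "\<And>x. x \<in> S \<Longrightarrow> f x \<in> S" "\<And>x. x \<in> S \<Longrightarrow> f x = g x" "x \<in> S"
  shows "cycle_of f x = cycle_of g x" "cycle_of f x \<subseteq> S"
proof -
  have "(f ^^ k) x = (g ^^ k) x" "(f ^^ k) x \<in> S" for k
    using funpow_agree_on_invariant[of S f g, OF assms] by blast+
  then show "cycle_of f x = cycle_of g x" "cycle_of f x \<subseteq> S"
    unfolding cycle_of_def by auto
qed

locale adjacent_blocks =
  fixes a m b :: nat and p1 p2 :: "nat \<Rightarrow> nat"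
  assumes a_le_m: "a \<le> m" and m_le_b: "m \<le> b"
    and perm1: "p1 permutes {a..<m}" and perm2: "p2 permutes {m..<b}"
begin

lemma lower_values: "a \<le> i \<Longrightarrow> i < m \<Longrightarrow> a \<le> p1 i \<and> p1 i < m"
  using permutes_in_image[OF perm1, of i] by simp

lemma upper_values: "m \<le> i \<Longrightarrow> i < b \<Longrightarrow> m \<le> p2 i \<and> p2 i < b"
  using permutes_in_image[OF perm2, of i] by simp

lemma comp_apply_lower: "i < m \<Longrightarrow> (p1 \<circ> p2) i = p1 i"
  using permutes_not_in[OF perm2, of i] by simp

lemma comp_apply_upper: "m \<le> i \<Longrightarrow> (p1 \<circ> p2) i = p2 i"
  using upper_values[of i] permutes_not_in[OF perm2, of i] permutes_not_in[OF perm1, of "p2 i"]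
  by (cases "i < b") auto

lemma permutes_comp: "p1 \<circ> p2 permutes {a..<b}"
  using permutes_compose[OF permutes_subset[OF perm2] permutes_subset[OF perm1]] a_le_m m_le_b
  by auto

lemma lower_below_upper: "a \<le> i \<Longrightarrow> i < m \<Longrightarrow> m \<le> j \<Longrightarrow> j < b \<Longrightarrow> (p1 \<circ> p2) i < (p1 \<circ> p2) j"
  using lower_values[of i] upper_values[of j] comp_apply_lower[of i] comp_apply_upper[of j] by simp

lemma pattern_free_on_comp:
  assumes "\<And>x y z. P x y z \<Longrightarrow> z < x"
    and "pattern_free_on P a m p1" "pattern_free_on P m b p2"
  shows "pattern_free_on P a b (p1 \<circ> p2)"
proof (rule pattern_free_on_concat[OF assms(1) a_le_m m_le_b lower_below_upper])
  show "pattern_free_on P a m (p1 \<circ> p2)"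
    using assms(2) pattern_free_on_cong[of a m "p1 \<circ> p2" p1 P] comp_apply_lower by simp
  show "pattern_free_on P m b (p1 \<circ> p2)"
    using assms(3) pattern_free_on_cong[of m b "p1 \<circ> p2" p2 P] comp_apply_upper by simp
qed

lemma layered_on_comp: "layered_on a m p1 \<Longrightarrow> layered_on m b p2 \<Longrightarrow> layered_on a b (p1 \<circ> p2)"
  unfolding layered_on_def using permutes_comp pattern_free_on_comp[of "\<lambda>x y z. z < x \<and> x < y"]
    pattern_free_on_comp[of "\<lambda>x y z. y < z \<and> z < x"] by auto

lemma displacement_on_comp:
  "displacement_on a b (p1 \<circ> p2) = displacement_on a m p1 + displacement_on m b p2"
proof -
  have "displacement_on a b (p1 \<circ> p2) = displacement_on a m (p1 \<circ> p2) + displacement_on m b (p1 \<circ> p2)"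
    unfolding displacement_on_def by (rule sum.atLeastLessThan_concat[OF a_le_m m_le_b, symmetric])
  also have "\<dots> = displacement_on a m p1 + displacement_on m b p2"
    unfolding displacement_on_def using comp_apply_lower comp_apply_upper
    by (intro arg_cong2[where f = "(+)"] sum.cong) auto
  finally show ?thesis .
qed

lemma inversions_on_comp:
  "inversions_on a b (p1 \<circ> p2) = inversions_on a m p1 + inversions_on m b p2"
proof -
  let ?p = "p1 \<circ> p2"
  have "{(i, j). a \<le> i \<and> i < j \<and> j < b \<and> ?p j < ?p i} =
        {(i, j). a \<le> i \<and> i < j \<and> j < m \<and> p1 j < p1 i} \<union>
        {(i, j). m \<le> i \<and> i < j \<and> j < b \<and> p2 j < p2 i}"
    (is "?L = ?A \<union> ?B")
  proof
    show "?L \<subseteq> ?A \<union> ?B"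
    proof
      fix x assume "x \<in> ?L"
      then obtain i j where x: "x = (i, j)" "a \<le> i" "i < j" "j < b" "?p j < ?p i"
        by blast
      then show "x \<in> ?A \<union> ?B"
        using lower_below_upper[of i j] comp_apply_lower[of i] comp_apply_lower[of j]
          comp_apply_upper[of i] comp_apply_upper[of j]
        by (cases "j < m"; cases "m \<le> i") auto
    qed
    show "?A \<union> ?B \<subseteq> ?L"
      using a_le_m m_le_b comp_apply_lower comp_apply_upper by auto
  qed
  moreover have "card ({(i, j). a \<le> i \<and> i < j \<and> j < m \<and> p1 j < p1 i} \<union>
        {(i, j). m \<le> i \<and> i < j \<and> j < b \<and> p2 j < p2 i}) = inversions_on a m p1 + inversions_on m b p2"
    unfolding inversions_on_def by (rule card_Un_disjoint) (auto simp: finite_ordered_pairs)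
  ultimately show ?thesis
    by (simp add: inversions_on_def)
qed

lemma num_cycles_on_comp:
  "num_cycles_on a b (p1 \<circ> p2) = num_cycles_on a m p1 + num_cycles_on m b p2"
proof -
  let ?p = "p1 \<circ> p2"
  have lower: "cycle_of ?p i = cycle_of p1 i" "cycle_of ?p i \<subseteq> {a..<m}" if "i \<in> {a..<m}" for i
    using cycle_of_agree_on_invariant[of "{a..<m}" ?p p1] lower_values comp_apply_lower that by auto
  have upper: "cycle_of ?p i = cycle_of p2 i" "cycle_of ?p i \<subseteq> {m..<b}" if "i \<in> {m..<b}" for i
    using cycle_of_agree_on_invariant[of "{m..<b}" ?p p2] upper_values comp_apply_upper that by auto
  have "{a..<b} = {a..<m} \<union> {m..<b}"
    using a_le_m m_le_b by auto
  then have "cycle_of ?p ` {a..<b} = cycle_of ?p ` {a..<m} \<union> cycle_of ?p ` {m..<b}"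
    by auto
  moreover have "cycle_of ?p ` {a..<m} \<inter> cycle_of ?p ` {m..<b} = {}"
    using lower(2) upper(2) self_in_cycle_of by fastforce
  ultimately have "num_cycles_on a b ?p = card (cycle_of ?p ` {a..<m}) + card (cycle_of ?p ` {m..<b})"
    unfolding num_cycles_on_def by (simp add: card_Un_disjoint)
  also have "\<dots> = num_cycles_on a m p1 + num_cycles_on m b p2"
    unfolding num_cycles_on_def
    using image_cong[OF refl lower(1), of "{a..<m}"] image_cong[OF refl upper(1), of "{m..<b}"] by simp
  finally show ?thesis .
qed

lemma shallow_on_comp: "shallow_on a m p1 \<Longrightarrow> shallow_on m b p2 \<Longrightarrow> shallow_on a b (p1 \<circ> p2)"
  unfolding shallow_on_def displacement_on_comp inversions_on_comp num_cycles_on_comp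
  using a_le_m m_le_b by simp

end

lemma card_ordered_pairs: "2 * card {(i, j). a \<le> i \<and> i < j \<and> j < a + L} = L * (L - 1)"
proof (induction L)
  case 0
  have no_pairs: "{(i, j). a \<le> i \<and> i < j \<and> j < a + 0} = {}" by auto
  show ?case unfolding no_pairs by simp
next
  case (Suc L)
  have "{(i, j). a \<le> i \<and> i < j \<and> j < a + Suc L} =
      {(i, j). a \<le> i \<and> i < j \<and> j < a + L} \<union> (\<lambda>i. (i, a + L)) ` {a..<a + L}"
    by auto
  moreover have "card ({(i, j). a \<le> i \<and> i < j \<and> j < a + L} \<union> (\<lambda>i. (i, a + L)) ` {a..<a + L}) =
      card {(i, j). a \<le> i \<and> i < j \<and> j < a + L} + L"
    using finite_ordered_pairs[of a "a + L" "\<lambda>_ _. True"]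
    by (subst card_Un_disjoint) (auto simp: card_image inj_on_def)
  ultimately show ?case
    using Suc.IH by (cases L) (simp_all add: algebra_simps)
qed

lemma inversions_on_rev_ivl: "2 * inversions_on a (a + L) (rev_ivl a (a + L)) = L * (L - 1)"
proof -
  have "{(i, j). a \<le> i \<and> i < j \<and> j < a + L \<and> rev_ivl a (a + L) j < rev_ivl a (a + L) i} =
        {(i, j). a \<le> i \<and> i < j \<and> j < a + L}"
    using rev_ivl_decreasing[of a _ _ "a + L"] by auto
  then show ?thesis
    unfolding inversions_on_def using card_ordered_pairs by simp
qed

lemma sum_abs_odd_steps: "2 * (\<Sum>j<L. \<bar>int L - 1 - 2 * int j\<bar>) = int L * int L - int (L mod 2)"
proof (induction L rule: nat_induct2)
  case (step L)
  have "(\<Sum>j<Suc (Suc L). \<bar>int (Suc (Suc L)) - 1 - 2 * int j\<bar>) =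
        \<bar>int L + 1\<bar> + (\<Sum>j<Suc L. \<bar>int (Suc (Suc L)) - 1 - 2 * int (Suc j)\<bar>)"
    by (subst sum.lessThan_Suc_shift) simp
  also have "(\<Sum>j<Suc L. \<bar>int (Suc (Suc L)) - 1 - 2 * int (Suc j)\<bar>) =
             (\<Sum>j<Suc L. \<bar>int L - 1 - 2 * int j\<bar>)"
    by (rule sum.cong) auto
  also have "\<bar>int L + 1\<bar> + \<dots> = (\<Sum>j<L. \<bar>int L - 1 - 2 * int j\<bar>) + 2 * (int L + 1)"
    by simp
  finally have step_sum: "(\<Sum>j<Suc (Suc L). \<bar>int (Suc (Suc L)) - 1 - 2 * int j\<bar>) =
      (\<Sum>j<L. \<bar>int L - 1 - 2 * int j\<bar>) + 2 * (int L + 1)" .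
  show ?case
    unfolding add_2_eq_Suc' step_sum using step.IH by (simp add: algebra_simps)
qed simp_all

lemma displacement_on_rev_ivl:
  "2 * displacement_on a (a + L) (rev_ivl a (a + L)) = int L * int L - int (L mod 2)"
proof -
  have "displacement_on a (a + L) (rev_ivl a (a + L)) =
        (\<Sum>i\<in>{0 + a..<L + a}. \<bar>int (rev_ivl a (a + L) i) - int i\<bar>)"
    unfolding displacement_on_def by (simp add: add.commute)
  also have "\<dots> = (\<Sum>i\<in>{0..<L}. \<bar>int (rev_ivl a (a + L) (i + a)) - int (i + a)\<bar>)"
    by (rule sum.shift_bounds_nat_ivl)
  also have "\<dots> = (\<Sum>j<L. \<bar>int L - 1 - 2 * int j\<bar>)"
    by (auto simp: rev_ivl_def atLeast0LessThan intro: sum.cong)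
  finally show ?thesis
    using sum_abs_odd_steps by simp
qed

lemma funpow_rev_ivl: "(rev_ivl a b ^^ k) i = (if even k then i else rev_ivl a b i)"
  by (induction k) auto

lemma cycle_of_rev_ivl: "cycle_of (rev_ivl a b) i = {i, rev_ivl a b i}"
  unfolding cycle_of_def funpow_rev_ivl by (auto intro: exI[of _ 0] exI[of _ 1])

lemma cycles_rev_ivl:
  assumes "b \<le> a + 2 * h" "h \<le> b - a"
  shows "cycle_of (rev_ivl a b) ` {a..<b} = (\<lambda>i. {i, rev_ivl a b i}) ` {a..<a + h}"
proof
  show "cycle_of (rev_ivl a b) ` {a..<b} \<subseteq> (\<lambda>i. {i, rev_ivl a b i}) ` {a..<a + h}"
  proof
    fix X assume "X \<in> cycle_of (rev_ivl a b) ` {a..<b}"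
    then obtain i where i: "i \<in> {a..<b}" "X = {i, rev_ivl a b i}"
      by (auto simp: cycle_of_rev_ivl)
    show "X \<in> (\<lambda>i. {i, rev_ivl a b i}) ` {a..<a + h}"
    proof (cases "i < a + h")
      case False
      then have "rev_ivl a b i \<in> {a..<a + h}" "X = {rev_ivl a b i, rev_ivl a b (rev_ivl a b i)}"
        using i assms by (auto simp: rev_ivl_def)
      then show ?thesis by blast
    qed (use i in auto)
  qed
  show "(\<lambda>i. {i, rev_ivl a b i}) ` {a..<a + h} \<subseteq> cycle_of (rev_ivl a b) ` {a..<b}"
    using assms by (auto simp: cycle_of_rev_ivl)
qed

lemma num_cycles_on_rev_ivl: "2 * num_cycles_on a (a + L) (rev_ivl a (a + L)) = L + L mod 2"
proof -
  define h where "h = (L + 1) div 2"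
  have h: "h \<le> L" "2 * h = L + L mod 2"
    unfolding h_def by presburger+
  have "inj_on (\<lambda>i. {i, rev_ivl a (a + L) i}) {a..<a + h}"
    using h by (auto simp: inj_on_def doubleton_eq_iff rev_ivl_def)
  then have "num_cycles_on a (a + L) (rev_ivl a (a + L)) = h"
    unfolding num_cycles_on_def using cycles_rev_ivl[of "a + L" a h] h by (simp add: card_image)
  then show ?thesis
    using h by simp
qed

lemma shallow_on_rev_ivl:
  assumes "a \<le> b"
  shows "shallow_on a b (rev_ivl a b)"
proof -
  define L where "L = b - a"
  have b: "b = a + L" using assms by (simp add: L_def)
  have "2 * int (inversions_on a b (rev_ivl a b)) = int L * (int L - 1)"
    using arg_cong[OF inversions_on_rev_ivl[of a L], of int] b by (cases L) (simp_all add: algebra_simps)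
  moreover have "2 * int (num_cycles_on a b (rev_ivl a b)) = int L + int (L mod 2)"
    using arg_cong[OF num_cycles_on_rev_ivl[of a L], of int] b by simp
  moreover have "2 * displacement_on a b (rev_ivl a b) = int L * int L - int (L mod 2)"
    using displacement_on_rev_ivl[of a L] b by simp
  ultimately show ?thesis
    unfolding shallow_on_def L_def[symmetric] by (simp add: algebra_simps)
qed

lemma layered_on_imp_shallow_on: "layered_on a b p \<Longrightarrow> shallow_on a b p"
proof (induction "b - a" arbitrary: a p rule: less_induct)
  case less
  show ?case
  proof (cases "a < b")
    case False
    then have no_pairs: "{(i, j). a \<le> i \<and> i < j \<and> j < b \<and> p j < p i} = {}" by auto
    show ?thesis
      using False unfolding shallow_on_def inversions_on_def no_pairs
      by (simp add: displacement_on_def num_cycles_on_def)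
  next
    case True
    then obtain m q where m: "a < m" "m \<le> b" and q: "layered_on m b q" and p: "p = rev_ivl a m \<circ> q"
      using layered_on_decompose[OF less.prems] by blast
    interpret adjacent_blocks a m b "rev_ivl a m" q
      using m q rev_ivl_permutes by unfold_locales (auto simp: layered_on_def)
    have "shallow_on m b q"
      using less.hyps[of m q] m q by simp
    then show ?thesis
      unfolding p using shallow_on_comp shallow_on_rev_ivl m by simp
  qed
qed

section \<open>Counting centrosymmetric layered permutations\<close>

definition centrosymmetric_on :: "nat \<Rightarrow> nat \<Rightarrow> (nat \<Rightarrow> nat) \<Rightarrow> bool" where
  "centrosymmetric_on a b p \<longleftrightarrow> (\<forall>i. a \<le> i \<and> i < b \<longrightarrow> p (a + b - 1 - i) = a + b - 1 - p i)"

definition layered_centrosymmetric :: "nat \<Rightarrow> nat \<Rightarrow> (nat \<Rightarrow> nat) set" where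
  "layered_centrosymmetric a b = {p. layered_on a b p \<and> centrosymmetric_on a b p}"

definition with_end_blocks :: "nat \<Rightarrow> nat \<Rightarrow> nat \<Rightarrow> (nat \<Rightarrow> nat) \<Rightarrow> nat \<Rightarrow> nat" where
  "with_end_blocks a b k q = rev_ivl a (a + k) \<circ> (q \<circ> rev_ivl (b - k) b)"

lemma centrosymmetric_on_rev_ivl: "centrosymmetric_on a b (rev_ivl a b)"
  by (auto simp: centrosymmetric_on_def rev_ivl_def)

lemma finite_layered_centrosymmetric: "finite (layered_centrosymmetric a b)"
  by (rule finite_subset[of _ "{p. p permutes {a..<b}}"])
    (auto simp: layered_centrosymmetric_def layered_on_def finite_permutations)

lemma with_end_blocks_apply:
  assumes "a + 2 * k \<le> b" and q: "q permutes {a + k..<b - k}"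
  shows "i < a + k \<Longrightarrow> with_end_blocks a b k q i = rev_ivl a (a + k) i"
    and "a + k \<le> i \<Longrightarrow> i < b - k \<Longrightarrow> with_end_blocks a b k q i = q i"
    and "b - k \<le> i \<Longrightarrow> with_end_blocks a b k q i = rev_ivl (b - k) b i"
proof -
  have fix_outside: "q x = x" if "x < a + k \<or> b - k \<le> x" for x
    using permutes_not_in[OF q] that by auto
  show "with_end_blocks a b k q i = rev_ivl a (a + k) i" if "i < a + k"
  proof -
    have "i < b - k" using that assms(1) by linarith
    then show ?thesis
      using that fix_outside[of i] by (simp add: with_end_blocks_def rev_ivl_def)
  qed
  show "with_end_blocks a b k q i = q i" if "a + k \<le> i" "i < b - k"
    using that permutes_in_image[OF q, of i] by (simp add: with_end_blocks_def rev_ivl_def)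
  show "with_end_blocks a b k q i = rev_ivl (b - k) b i" if "b - k \<le> i"
  proof -
    define y where "y = rev_ivl (b - k) b i"
    have "b - k \<le> y" using that by (auto simp: y_def rev_ivl_def)
    then have "q y = y" "rev_ivl a (a + k) y = y"
      using fix_outside[of y] assms(1) by (auto simp: rev_ivl_def)
    then show ?thesis by (simp add: with_end_blocks_def y_def)
  qed
qed

lemma with_end_blocks_inverse:
  "rev_ivl a (a + k) (with_end_blocks a b k q (rev_ivl (b - k) b x)) = q x"
  by (simp add: with_end_blocks_def)

lemma inj_with_end_blocks: "inj (with_end_blocks a b k)"
  by (rule injI) (metis with_end_blocks_inverse ext)

lemma layered_on_with_end_blocks:
  assumes k: "a + 2 * k \<le> b" and q: "layered_on (a + k) (b - k) q"
  shows "layered_on a b (with_end_blocks a b k q)"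
proof -
  interpret inner: adjacent_blocks "a + k" "b - k" b q "rev_ivl (b - k) b"
    using k q rev_ivl_permutes by unfold_locales (auto simp: layered_on_def)
  interpret outer: adjacent_blocks a "a + k" b "rev_ivl a (a + k)" "q \<circ> rev_ivl (b - k) b"
    using k inner.permutes_comp rev_ivl_permutes by unfold_locales auto
  show ?thesis
    unfolding with_end_blocks_def
    by (rule outer.layered_on_comp[OF layered_on_rev_ivl inner.layered_on_comp[OF q layered_on_rev_ivl]])
qed

lemma centrosymmetric_on_with_end_blocks:
  assumes k: "a + 2 * k \<le> b" and q: "q permutes {a + k..<b - k}" "centrosymmetric_on (a + k) (b - k) q"
  shows "centrosymmetric_on a b (with_end_blocks a b k q)"
  unfolding centrosymmetric_on_def
proof (intro allI impI)
  fix i assume i: "a \<le> i \<and> i < b"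
  note block_values = with_end_blocks_apply[OF k q(1)]
  consider "i < a + k" | "a + k \<le> i" "i < b - k" | "b - k \<le> i" by linarith
  then show "with_end_blocks a b k q (a + b - 1 - i) = a + b - 1 - with_end_blocks a b k q i"
  proof cases
    case 2
    have "q (a + k + (b - k) - 1 - i) = a + k + (b - k) - 1 - q i"
      using q(2) 2 by (simp add: centrosymmetric_on_def)
    moreover have "a + k \<le> q i" "q i < b - k"
      using permutes_in_image[OF q(1), of i] 2 by auto
    ultimately show ?thesis
      using block_values(2)[of i] block_values(2)[of "a + b - 1 - i"] 2 k by simp
  qed (use i k block_values in \<open>auto simp: rev_ivl_def\<close>)
qed

lemma with_end_blocks_mem:
  assumes "a + 2 * k \<le> b" "q \<in> layered_centrosymmetric (a + k) (b - k)"
  shows "with_end_blocks a b k q \<in> layered_centrosymmetric a b"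
  using assms layered_on_with_end_blocks centrosymmetric_on_with_end_blocks
  by (auto simp: layered_centrosymmetric_def layered_on_def)

lemma centrosymmetric_on_last_run:
  assumes C: "centrosymmetric_on a b p" and "a + k < b"
    and first: "\<And>i. a \<le> i \<Longrightarrow> i < a + k \<Longrightarrow> p i = rev_ivl a (a + k) i"
  shows "\<And>i. b - k \<le> i \<Longrightarrow> i < b \<Longrightarrow> p i = rev_ivl (b - k) b i"
    and "1 \<le> k \<Longrightarrow> a + 2 * k \<le> b"
proof -
  show last: "p i = rev_ivl (b - k) b i" if "b - k \<le> i" "i < b" for i
  proof -
    define j where "j = a + b - 1 - i"
    have j: "a \<le> j" "j < a + k" "a + b - 1 - j = i"
      using that \<open>a + k < b\<close> by (auto simp: j_def)
    then have "p i = a + b - 1 - p j"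
      using C \<open>a + k < b\<close> by (auto simp: centrosymmetric_on_def)
    then show ?thesis
      using first[OF j(1,2)] that j \<open>a + k < b\<close> by (simp add: rev_ivl_def j_def)
  qed
  text \<open>Otherwise the last entry \<open>a\<close> of the first run would lie in the last run.\<close>
  show "a + 2 * k \<le> b" if "1 \<le> k"
  proof (rule ccontr)
    assume "\<not> a + 2 * k \<le> b"
    then have "b - k \<le> a + k - 1" "a + k - 1 < b" using that \<open>a + k < b\<close> by auto
    then have "p (a + k - 1) = (b - k) + b - 1 - (a + k - 1)"
      using last[of "a + k - 1"] by (simp add: rev_ivl_def)
    moreover have "p (a + k - 1) = a" using first[of "a + k - 1"] that by (simp add: rev_ivl_def)
    ultimately show False
      using \<open>\<not> a + 2 * k \<le> b\<close> \<open>a + k < b\<close> that by simp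
  qed
qed

lemma layered_centrosymmetric_middle:
  assumes p: "p \<in> layered_centrosymmetric a b" and k: "a + 2 * k \<le> b"
    and r: "r permutes {a + k..<b - k}" and rp: "\<And>i. a + k \<le> i \<Longrightarrow> i < b - k \<Longrightarrow> r i = p i"
  shows "r \<in> layered_centrosymmetric (a + k) (b - k)"
proof -
  have L: "layered_on a b p" and C: "centrosymmetric_on a b p"
    using p by (auto simp: layered_centrosymmetric_def)
  have "pattern_free_on P (a + k) (b - k) r" if "pattern_free_on P a b p" for P
    using pattern_free_on_subinterval[OF that, of "a + k" "b - k"]
      pattern_free_on_cong[of "a + k" "b - k" r p P] rp
    by simp
  then have "layered_on (a + k) (b - k) r"
    using r L by (simp add: layered_on_def)
  moreover have "centrosymmetric_on (a + k) (b - k) r"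
    unfolding centrosymmetric_on_def
  proof (intro allI impI)
    fix i assume i: "a + k \<le> i \<and> i < b - k"
    then have "p (a + b - 1 - i) = a + b - 1 - p i"
      using C unfolding centrosymmetric_on_def by auto
    moreover have "a + k \<le> a + b - 1 - i" "a + b - 1 - i < b - k" using i k by auto
    ultimately show "r (a + k + (b - k) - 1 - i) = a + k + (b - k) - 1 - r i"
      using rp[of i] rp[of "a + b - 1 - i"] i k by simp
  qed
  ultimately show ?thesis
    by (simp add: layered_centrosymmetric_def)
qed

lemma layered_centrosymmetric_decompose:
  assumes p: "p \<in> layered_centrosymmetric a b" and "p \<noteq> rev_ivl a b"
  obtains k q where "1 \<le> k" "a + 2 * k \<le> b" "q \<in> layered_centrosymmetric (a + k) (b - k)"
    "p = with_end_blocks a b k q"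
proof -
  have L: "layered_on a b p" and C: "centrosymmetric_on a b p"
    using p by (auto simp: layered_centrosymmetric_def)
  have "a < b"
  proof (rule ccontr)
    assume "\<not> a < b"
    then have "p x = rev_ivl a b x" for x
      using L permutes_not_in[of p "{a..<b}" x] by (simp add: layered_on_def rev_ivl_def)
    with \<open>p \<noteq> rev_ivl a b\<close> show False by auto
  qed
  then obtain m q where m: "a < m" "m \<le> b" and q: "layered_on m b q" and pq: "p = rev_ivl a m \<circ> q"
    using layered_on_decompose[OF L] by blast
  interpret adjacent_blocks a m b "rev_ivl a m" q
    using m q rev_ivl_permutes by unfold_locales (auto simp: layered_on_def)
  have qperm: "q permutes {m..<b}" using q by (simp add: layered_on_def)
  have "m < b"
    using m pq qperm \<open>p \<noteq> rev_ivl a b\<close> by (cases "m = b") auto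
  define k where "k = m - a"
  have mk: "m = a + k" "1 \<le> k" using m by (auto simp: k_def)
  have first: "p i = rev_ivl a (a + k) i" if "a \<le> i" "i < a + k" for i
    using comp_apply_lower[of i] that mk by (simp add: pq)
  note mirror = centrosymmetric_on_last_run[OF C _ first]
  have k: "a + 2 * k \<le> b" using mirror(2) \<open>m < b\<close> mk by simp
  define r where "r = (\<lambda>x. if x \<in> {b - k..<b} then x else q x)"
  have "{b - k..<b} \<subseteq> {m..<b}" using k mk by auto
  moreover have "q x = rev_ivl (b - k) b x" if x: "x \<in> {b - k..<b}" for x
  proof -
    have "m \<le> x" using x k mk by auto
    then have "p x = q x" unfolding pq by (rule comp_apply_upper)
    with mirror(1)[of x] x \<open>m < b\<close> mk show ?thesis by simp
  qed
  ultimately have "r permutes {m..<b} - {b - k..<b}" "q = r \<circ> rev_ivl (b - k) b"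
    using permutes_split_off(1,3)[OF qperm rev_ivl_permutes[of "b - k" b]] unfolding r_def by blast+
  moreover have "{m..<b} - {b - k..<b} = {a + k..<b - k}" using mk by auto
  ultimately have "r permutes {a + k..<b - k}" "p = with_end_blocks a b k r"
    using pq mk by (simp_all add: with_end_blocks_def)
  moreover have "r i = p i" if "a + k \<le> i" "i < b - k" for i
    using that comp_apply_upper[of i] mk by (simp add: r_def pq)
  ultimately show thesis
    using that mk(2) k layered_centrosymmetric_middle[OF p k] by blast
qed

lemma layered_centrosymmetric_eq:
  "layered_centrosymmetric a b =
     insert (rev_ivl a b) (\<Union>k\<in>{1..(b - a) div 2}. with_end_blocks a b k ` layered_centrosymmetric (a + k) (b - k))"
  (is "_ = insert _ ?U")
proof
  show "layered_centrosymmetric a b \<subseteq> insert (rev_ivl a b) ?U"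
  proof
    fix p assume p: "p \<in> layered_centrosymmetric a b"
    show "p \<in> insert (rev_ivl a b) ?U"
    proof (cases "p = rev_ivl a b")
      case False
      then obtain k q where "1 \<le> k" "a + 2 * k \<le> b" "q \<in> layered_centrosymmetric (a + k) (b - k)"
        "p = with_end_blocks a b k q"
        using layered_centrosymmetric_decompose[OF p] by blast
      then show ?thesis by auto
    qed simp
  qed
  show "insert (rev_ivl a b) ?U \<subseteq> layered_centrosymmetric a b"
    using with_end_blocks_mem layered_on_rev_ivl centrosymmetric_on_rev_ivl
    by (auto simp: layered_centrosymmetric_def)
qed

lemma geometric_sum_two: "1 + (\<Sum>k\<in>{1..h}. (2::nat) ^ (h - k)) = 2 ^ h"
proof (induction h)
  case (Suc h)
  have "(\<Sum>k\<in>{1..Suc h}. (2::nat) ^ (Suc h - k)) = (\<Sum>k\<in>{1..h}. 2 ^ (Suc h - k)) + 1"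
    by simp
  also have "(\<Sum>k\<in>{1..h}. (2::nat) ^ (Suc h - k)) = (\<Sum>k\<in>{1..h}. 2 * 2 ^ (h - k))"
    by (rule sum.cong) (auto simp: Suc_diff_le)
  also have "\<dots> = 2 * (\<Sum>k\<in>{1..h}. 2 ^ (h - k))"
    by (simp add: sum_distrib_left)
  finally show ?case
    using Suc.IH by simp
qed simp

lemma with_end_blocks_first_value:
  assumes "1 \<le> k" "a + 2 * k \<le> b" "q \<in> layered_centrosymmetric (a + k) (b - k)"
  shows "with_end_blocks a b k q a = a + k - 1"
  using assms with_end_blocks_apply(1)[of a k b q a]
  by (auto simp: layered_centrosymmetric_def layered_on_def rev_ivl_def)

lemma card_layered_centrosymmetric: "card (layered_centrosymmetric a b) = 2 ^ ((b - a) div 2)"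
proof (induction "b - a" arbitrary: a b rule: less_induct)
  case less
  define h where "h = (b - a) div 2"
  let ?B = "\<lambda>k. with_end_blocks a b k ` layered_centrosymmetric (a + k) (b - k)"
  have k: "1 \<le> k" "a + 2 * k \<le> b" if "k \<in> {1..h}" for k
    using that by (auto simp: h_def)
  have first_value: "p a = a + k - 1" if "k \<in> {1..h}" "p \<in> ?B k" for p k
    using that with_end_blocks_first_value[OF k[OF that(1)]] by blast
  have "rev_ivl a b \<notin> ?B k" if "k \<in> {1..h}" for k
    using first_value[OF that, of "rev_ivl a b"] k[OF that] by (auto simp: rev_ivl_def)
  moreover have "card (\<Union>k\<in>{1..h}. ?B k) = (\<Sum>k\<in>{1..h}. card (?B k))"
  proof (rule card_UN_disjoint)
    show "\<forall>i\<in>{1..h}. \<forall>j\<in>{1..h}. i \<noteq> j \<longrightarrow> ?B i \<inter> ?B j = {}"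
    proof (intro ballI impI equals0I)
      fix i j p assume ij: "i \<in> {1..h}" "j \<in> {1..h}" "i \<noteq> j" and "p \<in> ?B i \<inter> ?B j"
      then have "a + i - 1 = a + j - 1"
        using first_value[of i p] first_value[of j p] by simp
      then show False using ij k[OF ij(1)] k[OF ij(2)] by simp
    qed
  qed (auto simp: finite_layered_centrosymmetric)
  moreover have "card (?B k) = 2 ^ (h - k)" if "k \<in> {1..h}" for k
  proof -
    have "card (?B k) = card (layered_centrosymmetric (a + k) (b - k))"
      by (rule card_image[OF inj_on_subset[OF inj_with_end_blocks subset_UNIV]])
    also have "\<dots> = 2 ^ ((b - k - (a + k)) div 2)"
      by (rule less.hyps) (use k[OF that] in simp)
    also have "(b - k - (a + k)) div 2 = h - k"
      using k[OF that] by (simp add: h_def)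
    finally show ?thesis .
  qed
  ultimately show ?case
    using geometric_sum_two[of h] finite_layered_centrosymmetric
    unfolding layered_centrosymmetric_eq[of a b] h_def[symmetric]
    by (simp add: card_insert_if)
qed

text \<open>Reverse-complementation maps occurrences of 312 to occurrences of 231.\<close>
lemma centrosymmetric_on_avoids_231_imp_312:
  assumes perm: "p permutes {a..<b}" and C: "centrosymmetric_on a b p" and A: "avoids_231_on a b p"
  shows "avoids_312_on a b p"
  unfolding pattern_free_on_def
proof clarify
  fix i j k assume ijk: "a \<le> i" "i < j" "j < k" "k < b" "p j < p k" "p k < p i"
  define c where "c = a + b - 1"
  have mirror: "p (c - i) = c - p i" "p (c - j) = c - p j" "p (c - k) = c - p k"
    using C ijk by (auto simp: centrosymmetric_on_def c_def)
  have "p i < b"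
    using permutes_in_image[OF perm, of i] ijk by simp
  then have "c - p i < c - p k" "c - p k < c - p j"
    using ijk unfolding c_def by linarith+
  moreover have "a \<le> c - k" "c - k < c - j" "c - j < c - i" "c - i < b"
    using ijk unfolding c_def by linarith+
  ultimately show False
    using pattern_free_onD[OF A, of "c - k" "c - j" "c - i"] mirror by simp
qed

lemma avoids_231_iff: "avoids_231 n p \<longleftrightarrow> avoids_231_on 1 (Suc n) p"
  unfolding avoids_231_def pattern_free_on_def by (simp add: less_Suc_eq_le)

lemma centrosymmetric_iff: "centrosymmetric n p \<longleftrightarrow> centrosymmetric_on 1 (Suc n) p"
  unfolding centrosymmetric_def centrosymmetric_on_def by auto

lemma shallow_iff: "shallow n p \<longleftrightarrow> shallow_on 1 (Suc n) p"
proof -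
  have "{(i, j). i \<in> {1..n} \<and> j \<in> {1..n} \<and> i < j \<and> p j < p i} =
        {(i, j). 1 \<le> i \<and> i < j \<and> j < Suc n \<and> p j < p i}"
    by auto
  then have "inversions n p = inversions_on 1 (Suc n) p"
    by (simp add: inversions_def inversions_on_def)
  moreover have "num_cycles n p \<le> n"
    using card_image_le[of "{1..n}" "cycle_of p"] by (simp add: num_cycles_def)
  ultimately show ?thesis
    unfolding shallow_def shallow_on_def reflection_len_def displacement_def displacement_on_def
      num_cycles_def num_cycles_on_def atLeastLessThanSuc_atLeastAtMost
    by simp arith
qed

lemma avoids_231_centrosymmetric_iff_layered:
  "p permutes {1..n} \<and> avoids_231 n p \<and> centrosymmetric n p \<longleftrightarrow>
     p \<in> layered_centrosymmetric 1 (Suc n)"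
  using centrosymmetric_on_avoids_231_imp_312[of p 1 "Suc n"]
  by (auto simp: layered_centrosymmetric_def layered_on_def avoids_231_iff centrosymmetric_iff
      atLeastLessThanSuc_atLeastAtMost)

theorem theorem4p7:
  fixes n :: nat
  assumes "n \<ge> 1"
  shows "card {p. p permutes {1..n} \<and> avoids_231 n p \<and> centrosymmetric n p \<and> shallow n p}
           = 2 ^ (n div 2)
         \<and> (\<forall>p. p permutes {1..n} \<and> avoids_231 n p \<and> centrosymmetric n p \<longrightarrow> shallow n p)"
proof -
  have shallow: "shallow n p" if "p \<in> layered_centrosymmetric 1 (Suc n)" for p
    using that layered_on_imp_shallow_on by (simp add: shallow_iff layered_centrosymmetric_def)
  then have "{p. p permutes {1..n} \<and> avoids_231 n p \<and> centrosymmetric n p \<and> shallow n p} =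
             layered_centrosymmetric 1 (Suc n)"
    using avoids_231_centrosymmetric_iff_layered by blast
  then show ?thesis
    using shallow avoids_231_centrosymmetric_iff_layered card_layered_centrosymmetric[of 1 "Suc n"]
    by simp
qed

end
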